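(* Let $\mathsf{G}$ be a connected undirected graph on $N=\{1,\dots,n\}$ with edge set $E$ and symmetric positive edge weights $w_{ij}=w_{ji}>0$, let $\mathbf{L}$ be its Laplacian, and consider $\dot{\bm{x}}=-\mathbf{L}\bm{x}$ on $M(\mathsf{a})=\{\bm{x}\in\mathbb{R}^n_{>0}:\frac1n\sum_i x_i=\mathsf{a}\}$ with $\mathsf{a}>0$ (the equilibrium value of each $x_i$). Set $\bm{\rho}=\bm{x}/\mathsf{a}$ and $H_{\mathrm{Gibbs}}(\rho)=\rho(\log\rho-1)$. Then $$V_{\mathrm{Gibbs}}(\bm{x})=\mathsf{a}\sum_{i=1}^n H_{\mathrm{Gibbs}}(\rho_i)=\sum_{i=1}^n x_i\Big(\log\frac{x_i}{\mathsf{a}}-1\Big)$$ is a strict Lyapunov function, and for every $\bm{x}\in M(\mathsf{a})$, $$-\mathbf{L}\bm{x}=-\mathbf{G}^{-1}_{\mathrm{Gibbs}}(\bm{x})\nabla V_{\mathrm{Gibbs}}(\bm{x}),$$ where $\mathbf{G}^{-1}_{\mathrm{Gibbs}}(\bm{x})$ is the Laplacian of $\mathsf{G}$ with state-dependent edge weights $\mathsf{a}\,w_{ij}\,\Lambda(\rho_i,\rho_j)$, $\Lambda(a,b)=\dfrac{a-b}{\log a-\log b}$ for $a\ne b$ and $\Lambda(a,a)=a$ (the logarithmic mean); i.e. $[\mathbf{G}^{-1}_{\mathrm{Gibbs}}(\bm{x})]_{ij}=-\mathsf{a}w_{ij}\Lambda(\rho_i,\rho_j)$ for $\{i,j\}\in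 E$, $0$ for other $i\ne j$, and $[\mathbf{G}^{-1}_{\mathrm{Gibbs}}(\bm{x})]_{ii}=\sum_{j:\{i,j\}\in E}\mathsf{a}w_{ij}\Lambda(\rho_i,\rho_j)$.
   Context: The Laplacian of the weighted undirected graph is $\mathbf{L}=[l_{ij}]$ with $l_{ij}=-w_{ij}$ for $\{i,j\}\in E$, $l_{ij}=0$ for other $i\ne j$, $l_{ii}=\sum_{j:\{i,j\}\in E}w_{ij}$. A strict Lyapunov function is a function $V$ such that along every trajectory whose initial state is not a consensus vector $c\bm{1}$, $V(\bm{x}(t))<V(\bm{x}(0))$ for all $0<t<\infty$. $\nabla$ denotes the Euclidean gradient in $\bm{x}$. *)

theory Defs
  imports "HOL-Analysis.Analysis"
begin

definition weighted_graph :: "('n \<Rightarrow> 'n \<Rightarrow> bool) \<Rightarrow> ('n \<Rightarrow> 'n \<Rightarrow> real) \<Rightarrow> bool" where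
  "weighted_graph E w \<longleftrightarrow>
     (\<forall>i. \<not> E i i) \<and> (\<forall>i j. E i j \<longleftrightarrow> E j i) \<and>
     (\<forall>i j. w i j = w j i) \<and> (\<forall>i j. E i j \<longrightarrow> w i j > 0)"

definition connected_graph :: "('n \<Rightarrow> 'n \<Rightarrow> bool) \<Rightarrow> bool" where
  "connected_graph E \<longleftrightarrow> (\<forall>i j. E\<^sup>*\<^sup>* i j)"

definition laplacian :: "('n::finite \<Rightarrow> 'n \<Rightarrow> bool) \<Rightarrow> ('n \<Rightarrow> 'n \<Rightarrow> real) \<Rightarrow> real^'n^'n" where
  "laplacian E w = (\<chi> i j. if i = j then (\<Sum>k\<in>{k. E i k}. w i k)
                             else if E i j then - w i j else 0)"

definition M_space :: "real \<Rightarrow> (real^'n::finite) set" where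
  "M_space a = {x. (\<forall>i. x $ i > 0) \<and> (\<Sum>i\<in>UNIV. x $ i) / real CARD('n) = a}"

definition consensus :: "real^'n \<Rightarrow> bool" where
  "consensus x \<longleftrightarrow> (\<exists>c. x = (\<chi> i. c))"

definition H_Gibbs :: "real \<Rightarrow> real" where
  "H_Gibbs \<rho> = \<rho> * (ln \<rho> - 1)"

definition V_Gibbs :: "real \<Rightarrow> real^'n::finite \<Rightarrow> real" where
  "V_Gibbs a x = a * (\<Sum>i\<in>UNIV. H_Gibbs (x $ i / a))"

definition log_mean :: "real \<Rightarrow> real \<Rightarrow> real" where
  "log_mean p q = (if p = q then p else (p - q) / (ln p - ln q))"

definition G_inv_Gibbs :: "('n::finite \<Rightarrow> 'n \<Rightarrow> bool) \<Rightarrow> ('n \<Rightarrow> 'n \<Rightarrow> real) \<Rightarrow> real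
    \<Rightarrow> real^'n \<Rightarrow> real^'n^'n" where
  "G_inv_Gibbs E w a x = laplacian E (\<lambda>i j. a * w i j * log_mean (x $ i / a) (x $ j / a))"

definition strict_lyapunov :: "real^'n^'n \<Rightarrow> (real^'n) set \<Rightarrow> (real^'n::finite \<Rightarrow> real) \<Rightarrow> bool" where
  "strict_lyapunov L S V \<longleftrightarrow>
     (\<forall>x :: real \<Rightarrow> real^'n.
        (\<forall>t\<ge>0. (x has_vector_derivative (- (L *v x t))) (at t within {0..})) \<longrightarrow>
        x 0 \<in> S \<longrightarrow> \<not> consensus (x 0) \<longrightarrow>
        (\<forall>t>0. V (x t) < V (x 0)))"

end

theory Submission
  imports Defs
begin

(*
  The gradient of V_Gibbs is (ln (x i / a))_i, and the identity
  x i - x j = a * log_mean (x i / a) (x j / a) * (ln (x i / a) - ln (x j / a))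
  turns L x into the state-dependent Laplacian applied to this gradient.
  Along the flow, dV/dt = -<L x, grad V> = -1/2 sum_ij w_ij (x i - x j) (ln x i - ln x j),
  a Dirichlet form evaluated at a monotone function of x: it is nonnegative, and on a
  connected graph it vanishes only at consensus. Trajectories stay positive because
  exp (d_j t) * x j t is nondecreasing as long as all components are nonnegative,
  d_j being the weighted degree of j. Strict decrease then follows from the negative
  derivative at t = 0 and monotonicity afterwards.
*)

lemma laplacian_mult_vec_nth:
  assumes "\<forall>i. \<not> E i i"
  shows "(laplacian E c *v y) $ i = (\<Sum>j | E i j. c i j * (y $ i - y $ j))"
proof -
  have "(laplacian E c *v y) $ i = (\<Sum>j\<in>UNIV. (if j = i then (\<Sum>k | E i k. c i k) * y $ i else 0)
        + (if E i j then - c i j * y $ j else 0))"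
    unfolding matrix_vector_mult_def laplacian_def using assms
    by (auto intro!: sum.cong)
  also have "\<dots> = (\<Sum>k | E i k. c i k) * y $ i - (\<Sum>j | E i j. c i j * y $ j)"
    by (simp add: sum.distrib sum.If_cases sum_negf)
  also have "\<dots> = (\<Sum>j | E i j. c i j * (y $ i - y $ j))"
    by (simp add: sum_subtractf sum_distrib_right right_diff_distrib)
  finally show ?thesis .
qed

lemma laplacian_row_le_degree:
  fixes E :: "'n::finite \<Rightarrow> 'n \<Rightarrow> bool"
  assumes "weighted_graph E w" "\<forall>k. 0 \<le> y $ k"
  shows "(laplacian E w *v y) $ j \<le> (\<Sum>k | E j k. w j k) * y $ j"
proof -
  from assms(1) have irrefl: "\<forall>i. \<not> E i i" and wpos: "\<And>i j. E i j \<Longrightarrow> w i j > 0"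
    unfolding weighted_graph_def by auto
  have "(\<Sum>k | E j k. w j k) * y $ j - (laplacian E w *v y) $ j = (\<Sum>k | E j k. w j k * y $ k)"
    unfolding laplacian_mult_vec_nth[of E, OF irrefl]
    by (simp add: sum_distrib_right sum_subtractf right_diff_distrib)
  also have "\<dots> \<ge> 0"
    using wpos assms(2) by (intro sum_nonneg) (simp add: less_imp_le)
  finally show ?thesis by simp
qed

lemma laplacian_inner_eq_edge_sum:
  fixes E :: "'n::finite \<Rightarrow> 'n \<Rightarrow> bool"
  assumes "weighted_graph E w"
  shows "2 * ((laplacian E w *v y) \<bullet> z)
    = (\<Sum>i\<in>UNIV. \<Sum>j | E i j. w i j * ((y $ i - y $ j) * (z $ i - z $ j)))"
proof -
  from assms have irrefl: "\<forall>i. \<not> E i i" and sym: "\<And>i j. E i j \<longleftrightarrow> E j i"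
    and wsym: "\<And>i j. w i j = w j i"
    unfolding weighted_graph_def by auto
  define T where "T i j = (if E i j then w i j * (y $ i - y $ j) * z $ i else 0)" for i j
  have "(laplacian E w *v y) \<bullet> z = (\<Sum>i\<in>UNIV. \<Sum>j\<in>UNIV. T i j)"
    unfolding inner_vec_def laplacian_mult_vec_nth[of E, OF irrefl] T_def
    by (simp add: sum.If_cases sum_distrib_right)
  moreover have "(\<Sum>i\<in>UNIV. \<Sum>j\<in>UNIV. T i j) = (\<Sum>i\<in>UNIV. \<Sum>j\<in>UNIV. T j i)"
    by (rule sum.swap)
  ultimately have "2 * ((laplacian E w *v y) \<bullet> z) = (\<Sum>i\<in>UNIV. \<Sum>j\<in>UNIV. T i j + T j i)"
    by (simp add: sum.distrib)
  also have "\<dots> = (\<Sum>i\<in>UNIV. \<Sum>j\<in>UNIV.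
      if E i j then w i j * ((y $ i - y $ j) * (z $ i - z $ j)) else 0)"
    unfolding T_def
    by (intro sum.cong refl) (auto simp: sym[of _ i for i] wsym[of _ i for i] algebra_simps)
  finally show ?thesis
    by (simp add: sum.If_cases)
qed

lemma mono_on_diff_mult_nonneg:
  fixes f :: "real \<Rightarrow> real"
  assumes "mono_on S f" "p \<in> S" "q \<in> S"
  shows "0 \<le> (p - q) * (f p - f q)"
  using mono_onD[OF assms(1) assms(2,3)] mono_onD[OF assms(1) assms(3,2)]
  by (cases "p \<le> q") (auto intro: mult_nonpos_nonpos)

lemma strict_mono_on_diff_mult_eq_0:
  fixes f :: "real \<Rightarrow> real"
  assumes "strict_mono_on S f" "p \<in> S" "q \<in> S" "(p - q) * (f p - f q) = 0"
  shows "p = q"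
  using strict_mono_onD[OF assms(1) assms(2,3)] strict_mono_onD[OF assms(1) assms(3,2)] assms(4)
  by (cases p q rule: linorder_cases) auto

lemma laplacian_inner_mono_nonneg:
  fixes E :: "'n::finite \<Rightarrow> 'n \<Rightarrow> bool"
  assumes "weighted_graph E w" "mono_on S f" "\<forall>i. y $ i \<in> S"
  shows "0 \<le> (laplacian E w *v y) \<bullet> (\<chi> i. f (y $ i))"
proof -
  have "0 \<le> w i j * ((y $ i - y $ j) * (f (y $ i) - f (y $ j)))" if "E i j" for i j
    using assms that mono_on_diff_mult_nonneg[OF assms(2)]
    by (intro mult_nonneg_nonneg[of "w i j"]) (auto simp: weighted_graph_def less_imp_le)
  then have "0 \<le> (\<Sum>i\<in>UNIV. \<Sum>j | E i j. w i j * ((y $ i - y $ j) * (f (y $ i) - f (y $ j))))"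
    by (intro sum_nonneg) auto
  then show ?thesis
    using laplacian_inner_eq_edge_sum[OF assms(1), of y "\<chi> i. f (y $ i)"] by simp
qed

lemma consensus_if_equal_on_edges:
  assumes "connected_graph E" "\<And>i j. E i j \<Longrightarrow> y $ i = y $ j"
  shows "consensus y"
proof -
  have "E\<^sup>*\<^sup>* i j \<Longrightarrow> y $ i = y $ j" for i j
    by (induction rule: rtranclp_induct) (auto dest: assms(2))
  then have "y = (\<chi> i. y $ undefined)"
    using assms(1) by (simp add: connected_graph_def vec_eq_iff)
  then show ?thesis
    unfolding consensus_def by blast
qed

lemma laplacian_inner_strict_mono_eq_0_imp_consensus:
  fixes E :: "'n::finite \<Rightarrow> 'n \<Rightarrow> bool"
  assumes "weighted_graph E w" "connected_graph E" "strict_mono_on S f" "\<forall>i. y $ i \<in> S"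
    and "(laplacian E w *v y) \<bullet> (\<chi> i. f (y $ i)) = 0"
  shows "consensus y"
proof (rule consensus_if_equal_on_edges[OF assms(2)])
  define P where "P i j = w i j * ((y $ i - y $ j) * (f (y $ i) - f (y $ j)))" for i j
  from assms(1) have wpos: "\<And>i j. E i j \<Longrightarrow> w i j > 0"
    unfolding weighted_graph_def by auto
  have P_nonneg: "E i j \<Longrightarrow> 0 \<le> P i j" for i j
    unfolding P_def
    using wpos mono_on_diff_mult_nonneg[OF strict_mono_on_imp_mono_on[OF assms(3)]] assms(4)
    by (simp add: less_imp_le)
  have "(\<Sum>i\<in>UNIV. \<Sum>j | E i j. P i j) = 0"
    using laplacian_inner_eq_edge_sum[OF assms(1), of y "\<chi> i. f (y $ i)"] assms(5)
    by (simp add: P_def)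
  then have "\<forall>i. (\<Sum>j | E i j. P i j) = 0"
    by (subst (asm) sum_nonneg_eq_0_iff) (auto intro: sum_nonneg P_nonneg)
  then have "E i j \<Longrightarrow> P i j = 0" for i j
    using sum_nonneg_eq_0_iff[of "{j. E i j}" "P i"] P_nonneg by auto
  then show "E i j \<Longrightarrow> y $ i = y $ j" for i j
    using wpos[of i j] strict_mono_on_diff_mult_eq_0[OF assms(3)] assms(4)
    unfolding P_def by (metis mult_eq_0_iff order_less_irrefl)
qed

lemma vec_nth_has_real_derivative:
  assumes "(x has_vector_derivative v) F"
  shows "((\<lambda>t. x t $ i) has_real_derivative v $ i) F"
  using bounded_linear.has_vector_derivative[OF bounded_linear_vec_nth assms, of i]
  by (simp add: has_real_derivative_iff_has_vector_derivative)

lemma exp_weighted_nondecreasing: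
  fixes g g' :: "real \<Rightarrow> real"
  assumes "0 \<le> s" "continuous_on {0..s} g"
    and "\<And>r. 0 < r \<Longrightarrow> r < s \<Longrightarrow> (g has_real_derivative g' r) (at r)"
    and "\<And>r. 0 < r \<Longrightarrow> r < s \<Longrightarrow> 0 \<le> g' r + D * g r"
  shows "g 0 \<le> exp (D * s) * g s"
proof -
  have "exp (D * 0) * g 0 \<le> exp (D * s) * g s"
  proof (rule DERIV_nonneg_imp_increasing_open[OF assms(1)])
    fix r :: real
    assume r: "0 < r" "r < s"
    then have "((\<lambda>t. exp (D * t) * g t) has_real_derivative exp (D * r) * (g' r + D * g r)) (at r)"
      using assms(3) by (auto intro!: derivative_eq_intros simp: algebra_simps)
    then show "\<exists>y. ((\<lambda>t. exp (D * t) * g t) has_real_derivative y) (at r) \<and> 0 \<le> y"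
      using assms(4)[OF r] by auto
  qed (use assms(2) in \<open>intro continuous_intros\<close>)
  then show ?thesis by simp
qed

lemma first_time_nonpositive:
  fixes f :: "'i::finite \<Rightarrow> real \<Rightarrow> real"
  assumes "\<And>k. continuous_on {0..t} (f k)" "0 \<le> t" "f j t \<le> 0"
  obtains s k where "0 \<le> s" "s \<le> t" "f k s \<le> 0" "\<And>r i. 0 \<le> r \<Longrightarrow> r < s \<Longrightarrow> 0 < f i r"
proof -
  define K where "K = (\<Union>k. {0..t} \<inter> f k -` {..0})"
  have "closed K"
    unfolding K_def
    by (intro closed_UN finite ballI continuous_closed_preimage assms(1)) auto
  moreover have "t \<in> K" "bdd_below K"
    using assms(2,3) unfolding K_def by auto
  ultimately have "Inf K \<in> K"
    using closed_contains_Inf by blast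
  moreover have "0 < f i r" if "0 \<le> r" "r < Inf K" for r i
  proof (rule ccontr)
    assume "\<not> 0 < f i r"
    moreover have "r \<le> t"
      using that cInf_lower[OF \<open>t \<in> K\<close> \<open>bdd_below K\<close>] by linarith
    ultimately have "r \<in> K"
      using \<open>0 \<le> r\<close> unfolding K_def by (auto simp: not_less)
    then show False
      using cInf_lower[OF _ \<open>bdd_below K\<close>] \<open>r < Inf K\<close> by fastforce
  qed
  moreover obtain k where "f k (Inf K) \<le> 0" "0 \<le> Inf K" "Inf K \<le> t"
    using \<open>Inf K \<in> K\<close> unfolding K_def by auto
  ultimately show ?thesis
    using that by blast
qed

lemma decreasing_if_initial_derivative_negative:
  fixes \<phi> \<phi>' :: "real \<Rightarrow> real"
  assumes deriv: "\<And>s. 0 \<le> s \<Longrightarrow> (\<phi> has_real_derivative \<phi>' s) (at s within {0..})"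
    and "\<And>s. 0 < s \<Longrightarrow> \<phi>' s \<le> 0" "\<phi>' 0 < 0" "0 < t"
  shows "\<phi> t < \<phi> 0"
proof -
  obtain d where "d > 0" and d: "\<And>h. 0 < h \<Longrightarrow> h < d \<Longrightarrow> \<phi> h < \<phi> 0"
    using has_real_derivative_neg_dec_right[OF deriv[of 0] assms(3)] by auto
  define h where "h = min t d / 2"
  have h: "0 < h" "h < d" "h \<le> t"
    using \<open>d > 0\<close> \<open>0 < t\<close> unfolding h_def by auto
  have "\<phi> t \<le> \<phi> h"
  proof (rule DERIV_nonpos_imp_nonincreasing[OF h(3)])
    fix r
    assume "h \<le> r" "r \<le> t"
    then have "0 < r" using h by simp
    then have "(\<phi> has_real_derivative \<phi>' r) (at r)"
      using deriv[of r] at_within_interior[of r "{0..}"] by simp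
    then show "\<exists>y. (\<phi> has_real_derivative y) (at r) \<and> y \<le> 0"
      using assms(2)[OF \<open>0 < r\<close>] by blast
  qed
  also have "\<phi> h < \<phi> 0"
    using d h by simp
  finally show ?thesis .
qed

lemma laplacian_flow_preserves_positivity:
  fixes x :: "real \<Rightarrow> real^'n::finite" and E :: "'n \<Rightarrow> 'n \<Rightarrow> bool"
  assumes "weighted_graph E w"
    and flow: "\<forall>t\<ge>0. (x has_vector_derivative (- (laplacian E w *v x t))) (at t within {0..})"
    and "\<forall>i. 0 < x 0 $ i" "0 \<le> t"
  shows "0 < x t $ i"
proof (rule ccontr)
  assume "\<not> 0 < x t $ i"
  have deriv: "((\<lambda>t. x t $ k) has_real_derivative - (laplacian E w *v x r) $ k) (at r within {0..})"
    if "0 \<le> r" for r k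
    using vec_nth_has_real_derivative[OF flow[rule_format, OF that]] by simp
  have cont: "continuous_on {0..} (\<lambda>t. x t $ k)" for k
    using DERIV_continuous_on[OF deriv] by blast
  have cont_t: "continuous_on {0..t} (\<lambda>t. x t $ k)" for k
    by (rule continuous_on_subset[OF cont]) auto
  have "x t $ i \<le> 0"
    using \<open>\<not> 0 < x t $ i\<close> by simp
  then obtain s j where s: "0 \<le> s" "s \<le> t" "x s $ j \<le> 0"
    and before: "\<And>r k. 0 \<le> r \<Longrightarrow> r < s \<Longrightarrow> 0 < x r $ k"
    by (rule first_time_nonpositive[of t "\<lambda>k t. x t $ k", OF cont_t \<open>0 \<le> t\<close>]) blast
  define D where "D = (\<Sum>k | E j k. w j k)"
  have "x 0 $ j \<le> exp (D * s) * x s $ j"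
  proof (rule exp_weighted_nondecreasing[where g' = "\<lambda>r. - (laplacian E w *v x r) $ j", OF s(1)])
    show "continuous_on {0..s} (\<lambda>t. x t $ j)"
      by (rule continuous_on_subset[OF cont]) auto
  next
    fix r :: real
    assume "0 < r" "r < s"
    then show "((\<lambda>t. x t $ j) has_real_derivative - (laplacian E w *v x r) $ j) (at r)"
      using deriv[of r j] at_within_interior[of r "{0..}"] by simp
  next
    fix r :: real
    assume r: "0 < r" "r < s"
    show "0 \<le> - (laplacian E w *v x r) $ j + D * x r $ j"
      using laplacian_row_le_degree[OF assms(1), of "x r" j] before[of r] r
      unfolding D_def by (auto simp: less_imp_le)
  qed
  also have "\<dots> \<le> 0"
    using s(3) by (simp add: mult_nonneg_nonpos)
  finally show False
    using assms(3) by (simp add: not_le[symmetric])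
qed

lemma strict_mono_on_ln_divide:
  fixes a :: real
  assumes "0 < a"
  shows "strict_mono_on {0<..} (\<lambda>p. ln (p / a))"
proof (rule strict_mono_onI)
  fix p q :: real
  assume "p \<in> {0<..}" "q \<in> {0<..}" "p < q"
  then show "ln (p / a) < ln (q / a)"
    using assms ln_less_cancel_iff[of "p / a" "q / a"] by (simp add: divide_strict_right_mono)
qed

lemma V_Gibbs_has_derivative:
  fixes y :: "real^'n::finite"
  assumes "0 < a" "\<forall>i. 0 < y $ i"
  shows "(V_Gibbs a has_derivative (\<lambda>h. h \<bullet> (\<chi> i. ln (y $ i / a)))) (at y)"
proof -
  have nonzero: "y $ i \<noteq> 0" for i
    using assms(2) by (metis less_irrefl)
  have eq: "V_Gibbs a = (\<lambda>x. \<Sum>i\<in>UNIV. x $ i * ln (x $ i / a) - x $ i)"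
    using assms(1) by (auto simp: V_Gibbs_def H_Gibbs_def sum_distrib_left algebra_simps)
  have "((\<lambda>x. \<Sum>i\<in>UNIV. x $ i * ln (x $ i / a) - x $ i) has_derivative
      (\<lambda>h. \<Sum>i\<in>UNIV. h $ i * ln (y $ i / a))) (at y)"
    using assms
    by (auto intro!: derivative_eq_intros bounded_linear_imp_has_derivative[OF bounded_linear_vec_nth]
        simp: nonzero)
  then show ?thesis
    unfolding eq inner_vec_def by (simp add: mult.commute)
qed

lemma log_mean_mult_ln_diff:
  assumes "0 < p" "0 < q"
  shows "log_mean p q * (ln p - ln q) = p - q"
proof (cases "p = q")
  case False
  then have "ln p \<noteq> ln q"
    using assms by simp
  then show ?thesis
    using False by (simp add: log_mean_def)
qed (simp add: log_mean_def)

lemma laplacian_eq_G_inv_Gibbs_mult_gradient: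
  fixes E :: "'n::finite \<Rightarrow> 'n \<Rightarrow> bool"
  assumes "weighted_graph E w" "0 < a" "\<forall>i. 0 < y $ i"
  shows "laplacian E w *v y = G_inv_Gibbs E w a y *v (\<chi> i. ln (y $ i / a))"
proof -
  from assms(1) have irrefl: "\<forall>i. \<not> E i i"
    unfolding weighted_graph_def by auto
  have edge: "w i j * (y $ i - y $ j)
      = a * w i j * log_mean (y $ i / a) (y $ j / a) * (ln (y $ i / a) - ln (y $ j / a))" for i j
    using log_mean_mult_ln_diff[of "y $ i / a" "y $ j / a"] assms(2,3)
    by (simp add: diff_divide_distrib[symmetric])
  then show ?thesis
    unfolding vec_eq_iff G_inv_Gibbs_def laplacian_mult_vec_nth[of E, OF irrefl] by (simp add: edge)
qed

lemma V_Gibbs_along_flow_has_derivative: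
  fixes x :: "real \<Rightarrow> real^'n::finite"
  assumes "0 < a" "\<forall>i. 0 < x s $ i"
    and "(x has_vector_derivative - (L *v x s)) (at s within S)"
  shows "((\<lambda>t. V_Gibbs a (x t)) has_real_derivative
      - ((L *v x s) \<bullet> (\<chi> i. ln (x s $ i / a)))) (at s within S)"
proof -
  have "(\<lambda>h. (h *\<^sub>R - (L *v x s)) \<bullet> (\<chi> i. ln (x s $ i / a)))
      = (*) (- ((L *v x s) \<bullet> (\<chi> i. ln (x s $ i / a))))"
    by auto
  then show ?thesis
    using has_derivative_compose[OF assms(3)[unfolded has_vector_derivative_def]
        V_Gibbs_has_derivative[OF assms(1,2)]]
    by (simp add: has_field_derivative_def o_def)
qed

lemma V_Gibbs_strict_lyapunov:
  fixes E :: "'n::finite \<Rightarrow> 'n \<Rightarrow> bool"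
  assumes "weighted_graph E w" "connected_graph E" "0 < a"
  shows "strict_lyapunov (laplacian E w) (M_space a) (V_Gibbs a)"
  unfolding strict_lyapunov_def
proof (intro allI impI)
  fix x :: "real \<Rightarrow> real^'n" and t :: real
  assume flow: "\<forall>t\<ge>0. (x has_vector_derivative - (laplacian E w *v x t)) (at t within {0..})"
    and "x 0 \<in> M_space a" and "\<not> consensus (x 0)" and "0 < t"
  define S where "S s = (laplacian E w *v x s) \<bullet> (\<chi> i. ln (x s $ i / a))" for s
  have pos: "\<forall>i. 0 < x s $ i" if "0 \<le> s" for s
    using laplacian_flow_preserves_positivity[OF assms(1) flow _ that] \<open>x 0 \<in> M_space a\<close>
    by (simp add: M_space_def)
  have ln_mono: "strict_mono_on {0<..} (\<lambda>p. ln (p / a))"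
    using strict_mono_on_ln_divide[OF assms(3)] .
  have S_nonneg: "0 \<le> S s" if "0 \<le> s" for s
    unfolding S_def
    using laplacian_inner_mono_nonneg[OF assms(1) strict_mono_on_imp_mono_on[OF ln_mono]] pos[OF that]
    by simp
  have "S 0 \<noteq> 0"
    unfolding S_def
    using laplacian_inner_strict_mono_eq_0_imp_consensus[OF assms(1,2) ln_mono] pos[of 0]
      \<open>\<not> consensus (x 0)\<close> by auto
  show "V_Gibbs a (x t) < V_Gibbs a (x 0)"
  proof (rule decreasing_if_initial_derivative_negative[where \<phi>' = "\<lambda>s. - S s"])
    show "((\<lambda>t. V_Gibbs a (x t)) has_real_derivative - S s) (at s within {0..})" if "0 \<le> s" for s
      unfolding S_def
      using V_Gibbs_along_flow_has_derivative[OF assms(3) pos[OF that] flow[rule_format, OF that]] .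
  qed (use S_nonneg \<open>S 0 \<noteq> 0\<close> \<open>0 < t\<close> in \<open>auto simp: less_le\<close>)
qed

theorem corollary1:
  fixes E :: "'n::finite \<Rightarrow> 'n \<Rightarrow> bool" and w :: "'n \<Rightarrow> 'n \<Rightarrow> real" and a :: real
  assumes "weighted_graph E w" and "connected_graph E" and "a > 0"
  shows "strict_lyapunov (laplacian E w) (M_space a) (V_Gibbs a)
    \<and> (\<forall>x::real^'n\<in>M_space a. V_Gibbs a x = (\<Sum>i\<in>UNIV. x $ i * (ln (x $ i / a) - 1)))
    \<and> (\<forall>x\<in>M_space a. \<exists>g. GDERIV (V_Gibbs a) x :> g
          \<and> - (laplacian E w *v x) = - (G_inv_Gibbs E w a x *v g))"
proof (intro conjI ballI)
  show "strict_lyapunov (laplacian E w) (M_space a) (V_Gibbs a)"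
    using V_Gibbs_strict_lyapunov[OF assms] .
next
  fix x :: "real^'n"
  show "V_Gibbs a x = (\<Sum>i\<in>UNIV. x $ i * (ln (x $ i / a) - 1))"
    using assms(3) by (simp add: V_Gibbs_def H_Gibbs_def sum_distrib_left)
next
  fix x :: "real^'n"
  assume "x \<in> M_space a"
  then have "\<forall>i. 0 < x $ i"
    by (simp add: M_space_def)
  then show "\<exists>g. GDERIV (V_Gibbs a) x :> g \<and> - (laplacian E w *v x) = - (G_inv_Gibbs E w a x *v g)"
    using V_Gibbs_has_derivative[OF assms(3)] laplacian_eq_G_inv_Gibbs_mult_gradient[OF assms(1,3)]
    unfolding gderiv_def by auto
qed

end
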